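(* Let $n$ be an integer and let \[ L(n) = p(n) + \sum_{j\geq 1} (-1)^j\Big( p\big(n-j(3j-2)\big) + p\big(n-j(3j+2)\big)\Big) = p(n) - p(n-1) - p(n-5) + p(n-8) + p(n-16) - p(n-21) - p(n-33) + \cdots. \] For $i\geq 1$ let $t^e_i = \frac{(2i-1)(2i-1+(-1)^i)}{2}$ be the $i$th even triangular number ($0, 6, 10, 28, \dots$) and $t^o_i = \frac{(2i-1)(2i-1-(-1)^i)}{2}$ the $i$th odd triangular number ($1,3,15,21,\dots$). If $n$ is even, then \[ L(n) = \sum_{i\geq 1} p\!\left(\frac{n-3t^e_i}{2}\right), \] and if $n$ is odd, then \[ L(n) = \sum_{i\geq 1} p\!\left(\frac{n-3t^o_i}{2}\right). \]
   Context: $p(m)$ denotes the number of partitions of the integer $m$, with $p(0)=1$ and $p(m)=0$ for $m<0$ (so all sums above are finite). Triangular numbers are the numbers $k(k+1)/2$, $k\geq 0$ (including $0$). *)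

theory Defs
  imports Main "HOL-Library.Multiset"
begin

definition partitions :: "nat \<Rightarrow> nat multiset set" where
  "partitions m = {M. (\<forall>x\<in>#M. 0 < x) \<and> sum_mset M = m}"

definition p :: "int \<Rightarrow> int" where
  "p m = (if m < 0 then 0 else int (card (partitions (nat m))))"

text \<open>L(n) = p(n) + sum_{j>=1} (-1)^j (p(n - j(3j-2)) + p(n - j(3j+2))).
  Terms with j > |n| vanish, so the sum is taken over 1..|n|+1.\<close>
definition L :: "int \<Rightarrow> int" where
  "L n = p n + (\<Sum>j\<in>{1..nat \<bar>n\<bar> + 1}.
      (-1) ^ j * (p (n - int j * (3 * int j - 2)) + p (n - int j * (3 * int j + 2))))"

definition te :: "nat \<Rightarrow> int" where
  "te i = ((2 * int i - 1) * (2 * int i - 1 + (-1) ^ i)) div 2"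

definition to :: "nat \<Rightarrow> int" where
  "to i = ((2 * int i - 1) * (2 * int i - 1 - (-1) ^ i)) div 2"

end

(*
  Let P(q) = sum p(m) q^m, E(q) = sum_l (-1)^l q^(l(3l-1)/2), T(q) = sum_j (-1)^j q^(j(3j+2))
  and D(q) = sum_(a>=0) q^(3a(a+1)/2). Then L(n) is the coefficient of q^n in T(q) P(q), and
  Euler's pentagonal number theorem says E(q) P(q) = 1; it follows from Shanks' finite identity,
  whose left-hand side agrees with (q;q)_n up to degree n.

  The substitution (j, k) -> (j - k, -(j + k)), where m = j - k is folded onto a >= 0 by
  m -> -1 - m (which keeps m(m+1)), is a bijection from Z x Z onto N x Z that carries
  j(3j+2) + k(3k-1) to 3a(a+1)/2 + l(3l-1)/2 and (-1)^(j+k) to (-1)^l. Hence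
  T(q) E(q^2) = D(q) E(q), that is T(q) P(q) = D(q) P(q^2). On the right, a = 2i-2 and
  a = 2i-1 give the triangular numbers t^e_i and t^o_i, and only the one with the parity of n
  contributes to the coefficient of q^n.
*)

theory Submission
  imports Defs "HOL-Computational_Algebra.Formal_Power_Series" "HOL-Library.Nat_Bijection"
begin

unbundle fps_syntax

section \<open>Partitions with bounded parts\<close>

definition bounded_partitions :: "nat \<Rightarrow> nat \<Rightarrow> nat multiset set" where
  "bounded_partitions k m = {M. set_mset M \<subseteq> {1..k} \<and> sum_mset M = m}"

lemma size_le_sum_mset_pos:
  fixes M :: "nat multiset"
  assumes "0 \<notin># M"
  shows "size M \<le> sum_mset M"
  using assms by (induction M) auto

lemma member_le_sum_mset:
  fixes M :: "nat multiset"
  assumes "x \<in># M"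
  shows "x \<le> sum_mset M"
  using assms by (metis mset_add sum_mset.add_mset le_add1)

lemma finite_bounded_partitions: "finite (bounded_partitions k m)"
proof (rule finite_subset)
  show "bounded_partitions k m \<subseteq> (\<Union>s\<le>m. multisets_of_size {1..k} s)"
  proof
    fix M assume M: "M \<in> bounded_partitions k m"
    then have "0 \<notin># M" by (auto simp: bounded_partitions_def)
    with M show "M \<in> (\<Union>s\<le>m. multisets_of_size {1..k} s)"
      using size_le_sum_mset_pos[of M]
      by (auto simp: bounded_partitions_def multisets_of_size_def)
  qed
qed auto

lemma bounded_partitions_0: "bounded_partitions 0 m = (if m = 0 then {{#}} else {})"
  by (auto simp: bounded_partitions_def)

lemma bounded_partitions_Suc:
  "bounded_partitions (Suc k) m = bounded_partitions k m \<union>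
     (if Suc k \<le> m then add_mset (Suc k) ` bounded_partitions (Suc k) (m - Suc k) else {})"
  (is "_ = ?R")
proof (intro equalityI subsetI)
  fix M assume M: "M \<in> bounded_partitions (Suc k) m"
  show "M \<in> ?R"
  proof (cases "Suc k \<in># M")
    case True
    then obtain M' where "M = add_mset (Suc k) M'" by (metis mset_add)
    with M show ?thesis by (auto simp: bounded_partitions_def)
  next
    case False
    with M have "set_mset M \<subseteq> {1..k}"
      by (fastforce simp: bounded_partitions_def le_Suc_eq)
    with M show ?thesis by (auto simp: bounded_partitions_def)
  qed
next
  fix M assume "M \<in> ?R"
  then show "M \<in> bounded_partitions (Suc k) m"
    by (auto simp: bounded_partitions_def split: if_splits)
qed

lemma card_bounded_partitions_Suc:
  "card (bounded_partitions (Suc k) m) = card (bounded_partitions k m) +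
     (if Suc k \<le> m then card (bounded_partitions (Suc k) (m - Suc k)) else 0)"
proof -
  have "bounded_partitions k m \<inter> add_mset (Suc k) ` B = {}" for B
    by (auto simp: bounded_partitions_def)
  moreover have "inj_on (add_mset (Suc k)) B" for B
    by (simp add: inj_on_def)
  ultimately show ?thesis
    by (subst bounded_partitions_Suc)
      (simp add: card_Un_disjoint finite_bounded_partitions card_image)
qed

lemma partitions_eq_bounded_partitions:
  assumes "m \<le> k"
  shows "partitions m = bounded_partitions k m"
  using assms member_le_sum_mset
  by (fastforce simp: partitions_def bounded_partitions_def)

definition bounded_partition_fps :: "nat \<Rightarrow> int fps" where
  "bounded_partition_fps k = Abs_fps (\<lambda>m. int (card (bounded_partitions k m)))"

definition partition_fps :: "int fps" where
  "partition_fps = Abs_fps (\<lambda>m. p (int m))"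

(* In q-Pochhammer notation, qprod a b = (q^a; q)_(b-a+1). *)
definition qprod :: "nat \<Rightarrow> nat \<Rightarrow> int fps" where
  "qprod a b = (\<Prod>i\<in>{a..b}. 1 - fps_X ^ i)"

lemma qprod_empty: "b < a \<Longrightarrow> qprod a b = 1"
  by (simp add: qprod_def)

lemma qprod_Suc_right: "a \<le> Suc b \<Longrightarrow> qprod a (Suc b) = qprod a b * (1 - fps_X ^ Suc b)"
  by (simp add: qprod_def prod.nat_ivl_Suc' mult.commute)

lemma qprod_Suc_left: "a \<le> b \<Longrightarrow> qprod a b = (1 - fps_X ^ a) * qprod (Suc a) b"
  by (simp add: qprod_def prod.atLeast_Suc_atMost)

lemma bounded_partition_fps_Suc:
  "bounded_partition_fps (Suc k) * (1 - fps_X ^ Suc k) = bounded_partition_fps k"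
proof (rule fps_ext)
  fix m
  have "(bounded_partition_fps (Suc k) * (1 - fps_X ^ Suc k)) $ m
      = bounded_partition_fps (Suc k) $ m - (bounded_partition_fps (Suc k) * fps_X ^ Suc k) $ m"
    by (simp add: right_diff_distrib)
  also have "\<dots> = bounded_partition_fps k $ m"
    by (simp add: fps_X_power_mult_right_nth bounded_partition_fps_def card_bounded_partitions_Suc[of k m]
      del: power_Suc)
  finally show "(bounded_partition_fps (Suc k) * (1 - fps_X ^ Suc k)) $ m = bounded_partition_fps k $ m" .
qed

lemma bounded_partition_fps_times_qprod: "bounded_partition_fps k * qprod 1 k = 1"
proof (induction k)
  case 0
  show ?case
    by (rule fps_ext) (simp add: bounded_partition_fps_def qprod_def bounded_partitions_0)
next
  case (Suc k)
  have "bounded_partition_fps (Suc k) * qprod 1 (Suc k)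
      = bounded_partition_fps (Suc k) * (1 - fps_X ^ Suc k) * qprod 1 k"
    using qprod_Suc_right[of 1 k] by (simp add: ac_simps)
  also have "\<dots> = 1"
    by (simp only: bounded_partition_fps_Suc Suc.IH)
  finally show ?case .
qed

lemma partition_fps_nth: "m \<le> k \<Longrightarrow> partition_fps $ m = bounded_partition_fps k $ m"
  by (simp add: partition_fps_def bounded_partition_fps_def p_def partitions_eq_bounded_partitions)

section \<open>Generating functions of weighted sets\<close>

(* An infinite fibre of w contributes the junk coefficient 0, hence the hypothesis finite_fibres below. *)
definition weighted_fps :: "('a \<Rightarrow> nat) \<Rightarrow> ('a \<Rightarrow> int) \<Rightarrow> int fps" where
  "weighted_fps w s = Abs_fps (\<lambda>i. \<Sum>j | w j = i. s j)"

definition finite_fibres :: "('a \<Rightarrow> nat) \<Rightarrow> bool" where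
  "finite_fibres w \<longleftrightarrow> (\<forall>i. finite {j. w j = i})"

lemma finite_fibres_nat:
  assumes "\<And>x. x \<le> w x"
  shows "finite_fibres (w :: nat \<Rightarrow> nat)"
  unfolding finite_fibres_def
proof
  fix i
  have "{x. w x = i} \<subseteq> {..i}" using assms by force
  then show "finite {x. w x = i}" by (rule finite_subset) simp
qed

lemma finite_fibres_int:
  assumes "\<And>x. nat \<bar>x\<bar> \<le> w x"
  shows "finite_fibres (w :: int \<Rightarrow> nat)"
  unfolding finite_fibres_def
proof
  fix i
  have "{x. w x = i} \<subseteq> {-int i..int i}"
  proof
    fix x assume "x \<in> {x. w x = i}"
    with assms[of x] show "x \<in> {-int i..int i}" by auto
  qed
  then show "finite {x. w x = i}" by (rule finite_subset) simp
qed

lemma weighted_fps_mult: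
  assumes "finite_fibres w1" "finite_fibres w2"
  shows "weighted_fps w1 s1 * weighted_fps w2 s2
       = weighted_fps (\<lambda>(j, k). w1 j + w2 k) (\<lambda>(j, k). s1 j * s2 k)"
proof (rule fps_ext)
  fix n
  have fin: "finite {j. w1 j = i}" "finite {k. w2 k = i}" for i
    using assms by (simp_all add: finite_fibres_def)
  have "(weighted_fps w1 s1 * weighted_fps w2 s2) $ n
      = (\<Sum>i=0..n. \<Sum>x\<in>{j. w1 j = i} \<times> {k. w2 k = n - i}. (\<lambda>(j, k). s1 j * s2 k) x)"
    by (simp add: weighted_fps_def fps_mult_nth sum_product sum.cartesian_product)
  also have "\<dots> = (\<Sum>x\<in>(\<Union>i\<in>{0..n}. {j. w1 j = i} \<times> {k. w2 k = n - i}). (\<lambda>(j, k). s1 j * s2 k) x)"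
    by (rule sum.UNION_disjoint[symmetric]) (use fin in auto)
  also have "(\<Union>i\<in>{0..n}. {j. w1 j = i} \<times> {k. w2 k = n - i}) = {x. (\<lambda>(j, k). w1 j + w2 k) x = n}"
    by auto
  finally show "(weighted_fps w1 s1 * weighted_fps w2 s2) $ n
      = weighted_fps (\<lambda>(j, k). w1 j + w2 k) (\<lambda>(j, k). s1 j * s2 k) $ n"
    by (simp add: weighted_fps_def)
qed

lemma weighted_fps_reindex:
  assumes "bij h" "\<And>x. w2 (h x) = w1 x" "\<And>x. s2 (h x) = s1 x"
  shows "weighted_fps w1 s1 = weighted_fps w2 s2"
proof (rule fps_ext)
  fix n
  have "{y. w2 y = n} = h ` {x. w1 x = n}"
  proof (intro equalityI subsetI)
    fix y assume "y \<in> {y. w2 y = n}"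
    moreover obtain x where "y = h x"
      using assms(1) by (metis bij_pointE)
    ultimately show "y \<in> h ` {x. w1 x = n}"
      using assms(2) by auto
  qed (use assms(2) in auto)
  moreover have "inj_on h {x. w1 x = n}"
    using bij_is_inj[OF assms(1)] by (rule inj_on_subset) simp
  ultimately have "(\<Sum>y | w2 y = n. s2 y) = (\<Sum>x | w1 x = n. s2 (h x))"
    by (simp add: sum.reindex)
  then show "weighted_fps w1 s1 $ n = weighted_fps w2 s2 $ n"
    using assms(3) by (simp add: weighted_fps_def)
qed

lemma weighted_fps_nth_finite_sum:
  assumes "finite J" "{j. w j = i} \<subseteq> J"
  shows "(\<Sum>j\<in>J. of_int (s j) * fps_X ^ w j) $ i = weighted_fps w s $ i"
proof -
  have "(\<Sum>j\<in>J. of_int (s j) * fps_X ^ w j) $ i = (\<Sum>j\<in>J. if w j = i then s j else 0)"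
    by (auto simp: fps_sum_nth intro!: sum.cong)
  also have "\<dots> = (\<Sum>j\<in>J \<inter> {j. w j = i}. s j)"
    using assms(1) by (simp add: sum.inter_restrict)
  also have "J \<inter> {j. w j = i} = {j. w j = i}"
    using assms(2) by auto
  finally show ?thesis by (simp add: weighted_fps_def)
qed

lemma weighted_fps_mult_nth:
  assumes J: "finite J" "\<And>j. w j \<le> n \<Longrightarrow> j \<in> J"
    and f: "\<And>m. f $ m = F (int m)" "\<And>z. z < 0 \<Longrightarrow> F z = 0"
  shows "(weighted_fps w s * f) $ n = (\<Sum>j\<in>J. s j * F (int n - int (w j)))"
proof -
  define S where "S = {j\<in>J. w j \<le> n}"
  have "finite S" using J by (simp add: S_def)
  have "(weighted_fps w s * f) $ n = (\<Sum>a=0..n. (\<Sum>j | w j = a. s j) * F (int (n - a)))"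
    by (simp add: fps_mult_nth weighted_fps_def f)
  also have "\<dots> = (\<Sum>a\<in>{0..n}. \<Sum>j\<in>{x\<in>S. w x = a}. s j * F (int n - int (w j)))"
  proof (rule sum.cong)
    fix a assume a: "a \<in> {0..n}"
    then have "{j. w j = a} = {x\<in>S. w x = a}" using J by (auto simp: S_def)
    with a show "(\<Sum>j | w j = a. s j) * F (int (n - a)) = (\<Sum>j\<in>{x\<in>S. w x = a}. s j * F (int n - int (w j)))"
      by (auto simp: sum_distrib_right of_nat_diff intro!: sum.cong)
  qed simp
  also have "\<dots> = (\<Sum>j\<in>S. s j * F (int n - int (w j)))"
    by (rule sum.group) (use \<open>finite S\<close> in \<open>auto simp: S_def\<close>)
  also have "\<dots> = (\<Sum>j\<in>J. s j * F (int n - int (w j)))"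
  proof (rule sum.mono_neutral_left)
    show "\<forall>j\<in>J - S. s j * F (int n - int (w j)) = 0"
    proof
      fix j assume "j \<in> J - S"
      then have "int n - int (w j) < 0" by (auto simp: S_def)
      then show "s j * F (int n - int (w j)) = 0" by (simp add: f(2))
    qed
  qed (use J in \<open>auto simp: S_def\<close>)
  finally show ?thesis .
qed

definition fps_dilate2 :: "int fps \<Rightarrow> int fps" where
  "fps_dilate2 f = Abs_fps (\<lambda>m. if even m then f $ (m div 2) else 0)"

lemma fps_dilate2_weighted_fps: "fps_dilate2 (weighted_fps w s) = weighted_fps (\<lambda>x. 2 * w x) s"
proof (rule fps_ext)
  fix m
  have "{x. 2 * w x = m} = (if even m then {x. w x = m div 2} else {})"
    by auto
  then show "fps_dilate2 (weighted_fps w s) $ m = weighted_fps (\<lambda>x. 2 * w x) s $ m"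
    by (simp add: fps_dilate2_def weighted_fps_def)
qed

lemma weighted_fps_nth_id: "f = weighted_fps (\<lambda>i. i) (\<lambda>i. f $ i)"
  by (rule fps_ext) (simp add: weighted_fps_def)

lemma fps_dilate2_mult: "fps_dilate2 (f * g) = fps_dilate2 f * fps_dilate2 g"
proof -
  have fib: "finite_fibres (\<lambda>i::nat. i)" "finite_fibres (\<lambda>i::nat. 2 * i)"
    by (auto intro: finite_fibres_nat)
  have "f * g = weighted_fps (\<lambda>(i, j). i + j) (\<lambda>(i, j). f $ i * g $ j)"
    by (subst (1 2) weighted_fps_nth_id) (simp add: weighted_fps_mult fib)
  then have "fps_dilate2 (f * g) = weighted_fps (\<lambda>(i, j). 2 * i + 2 * j) (\<lambda>(i, j). f $ i * g $ j)"
    by (simp add: fps_dilate2_weighted_fps case_prod_unfold algebra_simps)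
  also have "\<dots> = weighted_fps (\<lambda>i. 2 * i) (\<lambda>i. f $ i) * weighted_fps (\<lambda>i. 2 * i) (\<lambda>i. g $ i)"
    by (simp add: weighted_fps_mult fib)
  also have "\<dots> = fps_dilate2 f * fps_dilate2 g"
    by (subst (3 4) weighted_fps_nth_id) (simp add: fps_dilate2_weighted_fps)
  finally show ?thesis .
qed

lemma fps_dilate2_one: "fps_dilate2 1 = 1"
  by (rule fps_ext) (auto simp: fps_dilate2_def)

section \<open>Euler's pentagonal number theorem\<close>

lemma two_triangle: "2 * triangle n = n * Suc n"
  by (induction n) auto

lemma two_triangle_int: "2 * int (triangle n) = int n * (int n + 1)"
  using arg_cong[OF two_triangle[of n], of int] by (simp add: algebra_simps)

lemma le_triangle: "n \<le> triangle n"
  by (induction n) auto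

definition alt_sign :: "int \<Rightarrow> int" where
  "alt_sign l = (-1) ^ nat \<bar>l\<bar>"

lemma alt_sign_eq: "alt_sign l = (if even l then 1 else -1)"
proof -
  have "even (nat \<bar>l\<bar>) \<longleftrightarrow> even l"
    by (simp add: even_nat_iff)
  then show ?thesis
    by (simp add: alt_sign_def minus_one_power_iff)
qed

lemma alt_sign_add: "alt_sign (j + k) = alt_sign j * alt_sign k"
  by (simp add: alt_sign_eq)

lemma alt_sign_uminus: "alt_sign (- l) = alt_sign l"
  by (simp add: alt_sign_eq)

definition pentagonal :: "int \<Rightarrow> nat" where
  "pentagonal l = nat (l * (3 * l - 1) div 2)"

lemma two_pentagonal: "2 * int (pentagonal l) = l * (3 * l - 1)"
proof -
  have "even (l * (3 * l - 1))"
    by (cases "even l") auto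
  moreover have "0 \<le> l * (3 * l - 1)"
    by (cases "l \<ge> 1") (auto intro: mult_nonneg_nonneg mult_nonpos_nonpos)
  ultimately show ?thesis
    by (auto simp: pentagonal_def)
qed

lemma abs_le_pentagonal: "nat \<bar>l\<bar> \<le> pentagonal l"
proof -
  have "2 * \<bar>l\<bar> \<le> l * (3 * l - 1)"
  proof (cases "l \<ge> 1")
    case True
    then have "l * 2 \<le> l * (3 * l - 1)"
      by (intro mult_left_mono) auto
    with True show ?thesis by simp
  next
    case False
    then have "0 \<le> l * (3 * l + 1)"
      by (cases "l = 0") (auto intro: mult_nonpos_nonpos)
    with False show ?thesis
      by (simp add: algebra_simps abs_if)
  qed
  then show ?thesis
    using two_pentagonal[of l] by linarith
qed

lemma pentagonal_of_nat: "pentagonal (int (Suc n)) = triangle (Suc n) + n * Suc n"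
proof -
  have "2 * int (pentagonal (int (Suc n))) = 2 * int (triangle (Suc n) + n * Suc n)"
    unfolding two_pentagonal of_nat_add two_triangle_int distrib_left
    by (simp add: algebra_simps)
  then show ?thesis
    by (simp only: mult_cancel_left of_nat_eq_iff) simp
qed

lemma pentagonal_of_neg: "pentagonal (- int (Suc n)) = Suc n * Suc n + triangle (Suc n)"
proof -
  have "2 * int (pentagonal (- int (Suc n))) = 2 * int (Suc n * Suc n + triangle (Suc n))"
    unfolding two_pentagonal of_nat_add two_triangle_int distrib_left
    by (simp add: algebra_simps)
  then show ?thesis
    by (simp only: mult_cancel_left of_nat_eq_iff) simp
qed

definition shanks_term :: "nat \<Rightarrow> nat \<Rightarrow> int fps" where
  "shanks_term n k = (-1) ^ k * fps_X ^ (n * k + triangle k) * qprod (Suc k) n"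

definition shanks_sum :: "nat \<Rightarrow> int fps" where
  "shanks_sum n = (\<Sum>k\<le>n. shanks_term n k)"

definition shanks_telescope :: "nat \<Rightarrow> nat \<Rightarrow> int fps" where
  "shanks_telescope n k = (-1) ^ k * fps_X ^ (triangle k + n * k) * qprod k n"

lemma shanks_term_Suc_diff:
  assumes "k \<le> n"
  shows "shanks_term (Suc n) k - shanks_term n k = shanks_telescope n (Suc k) - shanks_telescope n k"
proof -
  define c where "c = (-1) ^ k * fps_X ^ (n * k + triangle k) * qprod (Suc k) n"
  have "shanks_term (Suc n) k = c * fps_X ^ k * (1 - fps_X ^ Suc n)"
    using assms by (simp add: shanks_term_def c_def qprod_Suc_right power_add algebra_simps)
  moreover have "shanks_term n k = c"
    by (simp add: shanks_term_def c_def)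
  moreover have "shanks_telescope n (Suc k) = - (c * fps_X ^ k * fps_X ^ Suc n)"
    by (simp add: shanks_telescope_def c_def power_add algebra_simps)
  moreover have "shanks_telescope n k = c * (1 - fps_X ^ k)"
    using assms by (simp add: shanks_telescope_def c_def qprod_Suc_left algebra_simps)
  ultimately show ?thesis
    by (simp add: algebra_simps)
qed

lemma shanks_telescope_0: "shanks_telescope n 0 = 0"
  using qprod_Suc_left[of 0 n] by (simp add: shanks_telescope_def)

lemma shanks_sum_Suc:
  "shanks_sum (Suc n) = shanks_sum n +
     (-1) ^ Suc n * (fps_X ^ (Suc n * Suc n + triangle (Suc n)) + fps_X ^ (triangle (Suc n) + n * Suc n))"
proof -
  have "shanks_sum (Suc n) = shanks_term (Suc n) (Suc n) + (\<Sum>k<Suc n. shanks_term (Suc n) k)"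
    by (simp add: shanks_sum_def lessThan_Suc_atMost[symmetric])
  also have "(\<Sum>k<Suc n. shanks_term (Suc n) k)
      = (\<Sum>k<Suc n. shanks_term n k + (shanks_telescope n (Suc k) - shanks_telescope n k))"
    by (rule sum.cong) (auto simp: shanks_term_Suc_diff[symmetric])
  also have "\<dots> = shanks_sum n + shanks_telescope n (Suc n)"
    unfolding sum.distrib sum_lessThan_telescope shanks_telescope_0
    by (simp add: shanks_sum_def lessThan_Suc_atMost)
  finally show ?thesis
    by (simp add: shanks_term_def shanks_telescope_def qprod_empty algebra_simps)
qed

definition pentagonal_partial_sum :: "nat \<Rightarrow> int fps" where
  "pentagonal_partial_sum n = (\<Sum>l\<in>{-int n..int n}. of_int (alt_sign l) * fps_X ^ pentagonal l)"

lemma pentagonal_partial_sum_Suc: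
  "pentagonal_partial_sum (Suc n) = pentagonal_partial_sum n +
     (-1) ^ Suc n * (fps_X ^ (Suc n * Suc n + triangle (Suc n)) + fps_X ^ (triangle (Suc n) + n * Suc n))"
proof -
  have "{-int (Suc n)..int (Suc n)} = insert (- int (Suc n)) (insert (int (Suc n)) {-int n..int n})"
    by auto
  moreover have "alt_sign (int (Suc n)) = (-1) ^ Suc n" "alt_sign (- int (Suc n)) = (-1) ^ Suc n"
    by (simp_all add: alt_sign_def del: of_nat_Suc)
  ultimately show ?thesis
    by (simp add: pentagonal_partial_sum_def pentagonal_of_nat pentagonal_of_neg algebra_simps
        del: of_nat_Suc)
qed

lemma shanks_sum_eq_pentagonal_partial_sum: "shanks_sum n = pentagonal_partial_sum n"
proof (induction n)
  case 0
  show ?case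
    by (simp add: shanks_sum_def shanks_term_def pentagonal_partial_sum_def qprod_empty
        alt_sign_def pentagonal_def)
next
  case (Suc n)
  then show ?case
    by (simp add: shanks_sum_Suc pentagonal_partial_sum_Suc)
qed

lemma shanks_sum_nth:
  assumes "i \<le> n"
  shows "shanks_sum n $ i = qprod 1 n $ i"
proof -
  have "shanks_term n k $ i = 0" if "k \<in> {1..n}" for k
  proof -
    have "1 \<le> k" "n \<le> n * k" "k \<le> triangle k"
      using that le_triangle[of k] by auto
    with assms have "i < n * k + triangle k"
      by linarith
    then show ?thesis
      by (simp add: shanks_term_def mult.assoc fps_X_power_mult_nth mult.left_commute[of _ "fps_X ^ _"])
  qed
  then have "(\<Sum>k\<in>{1..n}. shanks_term n k) $ i = 0"
    by (simp add: fps_sum_nth)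
  moreover have "shanks_sum n = shanks_term n 0 + (\<Sum>k\<in>{1..n}. shanks_term n k)"
    by (simp add: shanks_sum_def atMost_atLeast0 sum.atLeast_Suc_atMost)
  ultimately show ?thesis
    by (simp add: shanks_term_def)
qed

definition euler_fps :: "int fps" where
  "euler_fps = weighted_fps pentagonal alt_sign"

lemma euler_fps_nth:
  assumes "i \<le> n"
  shows "euler_fps $ i = qprod 1 n $ i"
proof -
  have "{l. pentagonal l = i} \<subseteq> {-int n..int n}"
  proof
    fix l assume "l \<in> {l. pentagonal l = i}"
    with abs_le_pentagonal[of l] assms show "l \<in> {-int n..int n}"
      by auto
  qed
  then have "euler_fps $ i = pentagonal_partial_sum n $ i"
    by (simp add: euler_fps_def pentagonal_partial_sum_def weighted_fps_nth_finite_sum)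
  also have "\<dots> = qprod 1 n $ i"
    using assms by (simp add: shanks_sum_nth flip: shanks_sum_eq_pentagonal_partial_sum)
  finally show ?thesis .
qed

theorem euler_fps_times_partition_fps: "euler_fps * partition_fps = 1"
proof (rule fps_ext)
  fix n
  have "(euler_fps * partition_fps) $ n = (\<Sum>i=0..n. qprod 1 n $ i * bounded_partition_fps n $ (n - i))"
    by (auto simp: fps_mult_nth euler_fps_nth partition_fps_nth intro!: sum.cong)
  also have "\<dots> = (qprod 1 n * bounded_partition_fps n) $ n"
    by (simp add: fps_mult_nth)
  also have "\<dots> = 1 $ n"
    using bounded_partition_fps_times_qprod[of n] by (simp add: mult.commute)
  finally show "(euler_fps * partition_fps) $ n = 1 $ n" .
qed

section \<open>The octagonal identity\<close>

definition octagonal :: "int \<Rightarrow> nat" where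
  "octagonal j = nat (j * (3 * j + 2))"

lemma octagonal_int: "int (octagonal j) = j * (3 * j + 2)"
proof -
  have "0 \<le> j * (3 * j + 2)"
    by (cases "j \<ge> 0") (auto intro: mult_nonneg_nonneg mult_nonpos_nonpos)
  then show ?thesis
    by (simp add: octagonal_def)
qed

lemma abs_le_octagonal: "nat \<bar>j\<bar> \<le> octagonal j"
proof -
  have "\<bar>j\<bar> \<le> j * (3 * j + 2)"
  proof (cases "j \<ge> 0")
    case True
    then show ?thesis
      by (simp add: algebra_simps)
  next
    case False
    then have "0 \<le> j * (j + 1)"
      by (intro mult_nonpos_nonpos) auto
    with False show ?thesis
      by (simp add: algebra_simps)
  qed
  then show ?thesis
    using octagonal_int[of j] by simp
qed

definition octagonal_fps :: "int fps" where
  "octagonal_fps = weighted_fps octagonal alt_sign"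

definition triangular3_fps :: "int fps" where
  "triangular3_fps = weighted_fps (\<lambda>a. 3 * triangle a) (\<lambda>_. 1)"

definition rotate_fold :: "int \<times> int \<Rightarrow> nat \<times> int" where
  "rotate_fold = (\<lambda>(j, k). (if k \<le> j then nat (j - k) else nat (k - j - 1), - (j + k)))"

(* The parity of a + l tells which branch of the fold in rotate_fold was taken. *)
definition rotate_unfold :: "nat \<times> int \<Rightarrow> int \<times> int" where
  "rotate_unfold = (\<lambda>(a, l).
     let m = if even (int a + l) then int a else - 1 - int a in ((m - l) div 2, (- l - m) div 2))"

lemma rotate_unfold_fold: "rotate_unfold (rotate_fold x) = x"
proof (cases x)
  case (Pair j k)
  define a where "a = (if k \<le> j then nat (j - k) else nat (k - j - 1))"
  have m: "(if even (int a + - (j + k)) then int a else - 1 - int a) = j - k"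
  proof (cases "k \<le> j")
    case True
    then have a: "int a = j - k"
      by (simp add: a_def)
    then have "int a + - (j + k) = 2 * (- k)"
      by simp
    then have "even (int a + - (j + k))"
      by (subst \<open>int a + - (j + k) = 2 * (- k)\<close>) simp
    show ?thesis
      unfolding if_P[OF \<open>even (int a + - (j + k))\<close>] by (rule a)
  next
    case False
    then have a: "int a = k - j - 1"
      by (simp add: a_def)
    then have "int a + - (j + k) = 2 * (- j) - 1"
      by simp
    then have "odd (int a + - (j + k))"
      by (subst \<open>int a + - (j + k) = 2 * (- j) - 1\<close>) simp
    show ?thesis
      unfolding if_not_P[OF \<open>odd (int a + - (j + k))\<close>] using a by simp
  qed
  have fold: "rotate_fold x = (a, - (j + k))"
    by (simp add: Pair a_def rotate_fold_def)
  show ?thesis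
    unfolding fold rotate_unfold_def case_prod_conv Let_def m by (simp add: Pair)
qed

lemma rotate_fold_unfold: "rotate_fold (rotate_unfold y) = y"
proof (cases y)
  case (Pair a l)
  define m where "m = (if even (int a + l) then int a else - 1 - int a)"
  have "even (m - l)"
    by (auto simp: m_def)
  then obtain c where c: "m - l = 2 * c"
    by blast
  then have "- l - m = 2 * (- l - c)"
    by simp
  with c have "rotate_unfold y = (c, - l - c)"
    unfolding Pair rotate_unfold_def case_prod_conv Let_def m_def[symmetric] by simp
  moreover have "c - (- l - c) = m"
    using c by simp
  ultimately show ?thesis
    by (auto simp: Pair rotate_fold_def m_def)
qed

lemma bij_rotate_fold: "bij rotate_fold"
  by (rule o_bij[of rotate_unfold]) (auto simp: fun_eq_iff rotate_unfold_fold rotate_fold_unfold)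

lemma rotate_fold_weight:
  assumes "rotate_fold (j, k) = (a, l)"
  shows "3 * triangle a + pentagonal l = octagonal j + 2 * pentagonal k"
proof -
  have a: "int a * (int a + 1) = (j - k) * (j - k + 1)" and l: "l = - (j + k)"
    using assms by (auto simp: rotate_fold_def algebra_simps split: if_splits)
  have "int (2 * (3 * triangle a + pentagonal l)) = 3 * (2 * int (triangle a)) + 2 * int (pentagonal l)"
    by simp
  also have "\<dots> = 3 * ((j - k) * (j - k + 1)) + (- (j + k)) * (3 * (- (j + k)) - 1)"
    by (simp only: two_triangle_int two_pentagonal a l)
  also have "\<dots> = 2 * (j * (3 * j + 2)) + 2 * (k * (3 * k - 1))"
    by (simp add: algebra_simps)
  also have "\<dots> = int (2 * (octagonal j + 2 * pentagonal k))"
    by (simp add: octagonal_int flip: two_pentagonal)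
  finally show ?thesis
    by (simp only: of_nat_eq_iff) simp
qed

lemma rotate_fold_sign:
  assumes "rotate_fold (j, k) = (a, l)"
  shows "alt_sign l = alt_sign j * alt_sign k"
proof -
  have "l = - (j + k)"
    using assms by (simp add: rotate_fold_def)
  then show ?thesis
    by (simp only: alt_sign_uminus alt_sign_add)
qed

lemma octagonal_euler_identity:
  "octagonal_fps * fps_dilate2 euler_fps = triangular3_fps * euler_fps"
proof -
  have "nat \<bar>k\<bar> \<le> 2 * pentagonal k" "a \<le> 3 * triangle a" for k a
    using abs_le_pentagonal[of k] le_triangle[of a] by linarith+
  then have fib: "finite_fibres octagonal" "finite_fibres (\<lambda>k. 2 * pentagonal k)"
      "finite_fibres (\<lambda>a. 3 * triangle a)" "finite_fibres pentagonal"
    by (auto intro!: finite_fibres_int finite_fibres_nat abs_le_octagonal abs_le_pentagonal)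
  have "octagonal_fps * fps_dilate2 euler_fps
      = weighted_fps (\<lambda>(j, k). octagonal j + 2 * pentagonal k) (\<lambda>(j, k). alt_sign j * alt_sign k)"
    by (simp add: octagonal_fps_def euler_fps_def fps_dilate2_weighted_fps weighted_fps_mult fib)
  also have "\<dots> = weighted_fps (\<lambda>(a, l). 3 * triangle a + pentagonal l) (\<lambda>(a, l). 1 * alt_sign l)"
    by (rule weighted_fps_reindex[OF bij_rotate_fold])
      (auto simp: rotate_fold_weight rotate_fold_sign split: prod.split)
  also have "\<dots> = triangular3_fps * euler_fps"
    by (simp add: triangular3_fps_def euler_fps_def weighted_fps_mult fib)
  finally show ?thesis .
qed

lemma octagonal_partition_identity:
  "octagonal_fps * partition_fps = triangular3_fps * fps_dilate2 partition_fps"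
proof -
  have inv: "fps_dilate2 euler_fps * fps_dilate2 partition_fps = 1"
    by (simp flip: fps_dilate2_mult add: euler_fps_times_partition_fps fps_dilate2_one)
  have "octagonal_fps * partition_fps
      = octagonal_fps * fps_dilate2 euler_fps * partition_fps * fps_dilate2 partition_fps"
    using inv by (simp add: algebra_simps)
  also have "\<dots> = triangular3_fps * (euler_fps * partition_fps) * fps_dilate2 partition_fps"
    by (simp add: octagonal_euler_identity algebra_simps)
  finally show ?thesis
    by (simp add: euler_fps_times_partition_fps)
qed

lemma p_neg: "z < 0 \<Longrightarrow> p z = 0"
  by (simp add: p_def)

definition p_half :: "int \<Rightarrow> int" where
  "p_half z = (if even z then p (z div 2) else 0)"

lemma p_half_neg: "z < 0 \<Longrightarrow> p_half z = 0"
  by (simp add: p_half_def p_neg)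

lemma fps_dilate2_partition_fps_nth: "fps_dilate2 partition_fps $ m = p_half (int m)"
  by (simp add: fps_dilate2_def partition_fps_def p_half_def zdiv_int)

lemma sum_int_symmetric:
  "(\<Sum>j\<in>{-int K..int K}. f j) = f 0 + (\<Sum>j\<in>{1..K}. f (int j) + f (- int j))"
proof (induction K)
  case (Suc K)
  have "{-int (Suc K)..int (Suc K)} = insert (- int (Suc K)) (insert (int (Suc K)) {-int K..int K})"
    by auto
  with Suc show ?case
    by (simp add: algebra_simps del: of_nat_Suc)
qed simp

lemma sum_lessThan_double:
  fixes g :: "nat \<Rightarrow> 'a :: comm_monoid_add"
  shows "(\<Sum>a<2 * N. g a) = (\<Sum>i\<in>{1..N}. g (2 * i - 2) + g (2 * i - 1))"
  by (induction N) (simp_all add: algebra_simps)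

lemma octagonal_partition_fps_nth: "(octagonal_fps * partition_fps) $ n = L (int n)"
proof -
  have "(octagonal_fps * partition_fps) $ n
      = (\<Sum>j\<in>{-int (n + 1)..int (n + 1)}. alt_sign j * p (int n - int (octagonal j)))"
    unfolding octagonal_fps_def
  proof (rule weighted_fps_mult_nth)
    fix j assume "octagonal j \<le> n"
    with abs_le_octagonal[of j] show "j \<in> {-int (n + 1)..int (n + 1)}"
      by auto
  qed (auto simp: partition_fps_def p_neg)
  also have "\<dots> = L (int n)"
    by (simp add: sum_int_symmetric L_def octagonal_int alt_sign_def algebra_simps del: of_nat_Suc)
  finally show ?thesis .
qed

lemma te_eq: "te i = (if even i then (2 * int i - 1) * int i else (int i - 1) * (2 * int i - 1))"
proof -
  have "(2 * int i - 1) * (2 * int i - 1 + (-1) ^ i)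
      = 2 * (if even i then (2 * int i - 1) * int i else (int i - 1) * (2 * int i - 1))"
    by (simp add: algebra_simps)
  then show ?thesis
    by (simp add: te_def)
qed

lemma to_eq: "to i = (if even i then (int i - 1) * (2 * int i - 1) else (2 * int i - 1) * int i)"
proof -
  have "(2 * int i - 1) * (2 * int i - 1 - (-1) ^ i)
      = 2 * (if even i then (int i - 1) * (2 * int i - 1) else (2 * int i - 1) * int i)"
    by (simp add: algebra_simps)
  then show ?thesis
    by (simp add: to_def)
qed

lemma te_nonneg: "0 \<le> te i"
  by (cases "i = 0") (auto simp: te_eq intro!: mult_nonneg_nonneg)

lemma to_nonneg: "0 \<le> to i"
  by (cases "i = 0") (auto simp: to_eq intro!: mult_nonneg_nonneg)

lemma triangle_pair_eq_te_to:
  fixes f :: "int \<Rightarrow> 'a :: ab_semigroup_add"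
  assumes "i \<ge> 1"
  shows "f (int (triangle (2 * i - 2))) + f (int (triangle (2 * i - 1))) = f (te i) + f (to i)"
proof -
  have "2 * int (triangle (2 * i - 1)) = 2 * ((2 * int i - 1) * int i)"
    "2 * int (triangle (2 * i - 2)) = 2 * ((int i - 1) * (2 * int i - 1))"
    using assms by (simp_all add: two_triangle_int of_nat_diff algebra_simps)
  then show ?thesis
    by (cases "even i") (simp_all add: te_eq to_eq add.commute)
qed

lemma triangular3_partition_fps_nth:
  "(triangular3_fps * fps_dilate2 partition_fps) $ n
     = (\<Sum>i\<in>{1..n + 1}. p_half (int n - 3 * te i) + p_half (int n - 3 * to i))"
proof -
  have "(triangular3_fps * fps_dilate2 partition_fps) $ n
      = (\<Sum>a<2 * (n + 1). 1 * p_half (int n - int (3 * triangle a)))"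
    unfolding triangular3_fps_def
  proof (rule weighted_fps_mult_nth)
    fix a assume "3 * triangle a \<le> n"
    with le_triangle[of a] show "a \<in> {..<2 * (n + 1)}"
      by auto
  qed (auto simp: fps_dilate2_partition_fps_nth p_half_neg)
  also have "\<dots> = (\<Sum>i\<in>{1..n + 1}. p_half (int n - 3 * te i) + p_half (int n - 3 * to i))"
    unfolding sum_lessThan_double
    by (intro sum.cong refl)
      (use triangle_pair_eq_te_to[of _ "\<lambda>t. p_half (int n - 3 * t)"] in simp)
  finally show ?thesis .
qed

lemma L_neg:
  assumes "n < 0"
  shows "L n = 0"
proof -
  have "p (n - int j * (3 * int j - 2)) = 0" "p (n - int j * (3 * int j + 2)) = 0"
    if "j \<in> {1..nat \<bar>n\<bar> + 1}" for j
  proof -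
    from that have "0 \<le> int j * (3 * int j - 2)" "0 \<le> int j * (3 * int j + 2)"
      by auto
    with assms have "n - int j * (3 * int j - 2) < 0" "n - int j * (3 * int j + 2) < 0"
      by linarith+
    then show "p (n - int j * (3 * int j - 2)) = 0" "p (n - int j * (3 * int j + 2)) = 0"
      by (simp_all add: p_neg)
  qed
  with assms show ?thesis
    by (simp add: L_def p_neg)
qed

lemma L_eq_sum_p_half:
  "L n = (\<Sum>i\<in>{1..nat \<bar>n\<bar> + 1}. p_half (n - 3 * te i) + p_half (n - 3 * to i))"
proof (cases "n \<ge> 0")
  case True
  then obtain m where "n = int m"
    using nonneg_int_cases by blast
  then show ?thesis
    using octagonal_partition_fps_nth[of m] triangular3_partition_fps_nth[of m]
    by (simp add: octagonal_partition_identity)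
next
  case False
  have "p_half (n - 3 * te i) + p_half (n - 3 * to i) = 0" for i
    using False te_nonneg[of i] to_nonneg[of i] by (simp add: p_half_neg)
  with False show ?thesis
    by (simp add: L_neg)
qed

theorem theorem4:
  fixes n :: int
  shows "(even n \<longrightarrow> L n = (\<Sum>i\<in>{1..nat \<bar>n\<bar> + 1}. p ((n - 3 * te i) div 2)))
       \<and> (odd n \<longrightarrow> L n = (\<Sum>i\<in>{1..nat \<bar>n\<bar> + 1}. p ((n - 3 * to i) div 2)))"
proof -
  have "even (te i)" "odd (to i)" for i
    by (auto simp: te_eq to_eq)
  then have "p_half (n - 3 * te i) + p_half (n - 3 * to i)
      = (if even n then p ((n - 3 * te i) div 2) else p ((n - 3 * to i) div 2))" for i
    by (auto simp: p_half_def)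
  then show ?thesis
    by (simp add: L_eq_sum_p_half)
qed

end
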